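(* Let $D_K$ be a relative $K$-entropy satisfying Properties (a) and (b) below, and let $H_K$ be the associated conditional entropy, defined by one of the two forms below. Let $V_A:\mathcal{H}_A\to\mathcal{H}_{A'}$ and $V_B:\mathcal{H}_B\to\mathcal{H}_{B'}$ be isometries, $\rho_{AB}$ a density operator, and $\rho_{A'B'}:=(V_A\otimes V_B)\rho_{AB}(V_A^\dagger\otimes V_B^\dagger)$. Then $H_K(A|B)=H_K(A'|B')$, where the left side is evaluated on $\rho_{AB}$ and the right side on $\rho_{A'B'}$.
   Context: All Hilbert spaces are finite-dimensional. A relative $K$-entropy $D_K$ assigns to every pair $(S,T)$ of positive semidefinite operators on a common Hilbert space an extended real number $D_K(S\|T)$. Properties: (a) for every trace-preserving completely positive map $\mathcal{E}$ (possibly between different spaces), $D_K(\mathcal{E}(S)\|\mathcal{E}(T))\le D_K(S\|T)$; (b) for positive semidefinite $S,T$ on $\mathcal{H}$ and $T'$ on $\mathcal{H}'$, $D_K(S\oplus 0\,\|\,T\oplus T')=D_K(S\|T)$. The conditional $K$-entropy of a density operator $\rho_{AB}$ is either $H_K(A|B)=-D_K(\rho_{AB}\|\mathbb{1}_A\otimes\rho_B)$ for all $\rho_{AB}$, or $H_K(A|B)=\max_{\sigma_B}[-D_K(\rho_{AB}\|\mathbb{1}_A\otimes\sigma_B)]$ for all $\rho_{AB}$, maximum over density operators $\sigma_B$. *)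

theory Defs
  imports "Jordan_Normal_Form.Schur_Decomposition" "HOL-Library.Extended_Real"
begin

text \<open>Operators on a d-dimensional Hilbert space C^d are complex d x d matrices.
  A composite system AB with dimensions dA, dB is C^(dA*dB), basis index i*dB + j.\<close>

definition mtrace :: "complex mat \<Rightarrow> complex" where
  "mtrace A = (\<Sum>i<dim_row A. A $$ (i,i))"

definition psd :: "nat \<Rightarrow> complex mat \<Rightarrow> bool" where
  "psd n A \<longleftrightarrow> A \<in> carrier_mat n n \<and>
     (\<forall>v \<in> carrier_vec n. conjugate v \<bullet> (A *\<^sub>v v) \<in> \<real> \<and> Re (conjugate v \<bullet> (A *\<^sub>v v)) \<ge> 0)"

definition density :: "nat \<Rightarrow> complex mat \<Rightarrow> bool" where
  "density n \<rho> \<longleftrightarrow> psd n \<rho> \<and> mtrace \<rho> = 1"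

definition isometry :: "nat \<Rightarrow> nat \<Rightarrow> complex mat \<Rightarrow> bool" where
  "isometry n m V \<longleftrightarrow> V \<in> carrier_mat m n \<and> mat_adjoint V * V = 1\<^sub>m n"

definition kron :: "complex mat \<Rightarrow> complex mat \<Rightarrow> complex mat" where
  "kron A B = mat (dim_row A * dim_row B) (dim_col A * dim_col B)
     (\<lambda>(i,j). A $$ (i div dim_row B, j div dim_col B) * B $$ (i mod dim_row B, j mod dim_col B))"

definition ptrace_A :: "nat \<Rightarrow> nat \<Rightarrow> complex mat \<Rightarrow> complex mat" where
  "ptrace_A dA dB \<rho> = mat dB dB (\<lambda>(j,k). \<Sum>i<dA. \<rho> $$ (i*dB + j, i*dB + k))"

text \<open>Extension id_k \<otimes> E of a map E : n x n -> m x m to (k*n) x (k*n) matrices,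
  acting blockwise.\<close>
definition block :: "nat \<Rightarrow> nat \<Rightarrow> nat \<Rightarrow> complex mat \<Rightarrow> complex mat" where
  "block n i j X = mat n n (\<lambda>(a,b). X $$ (i*n + a, j*n + b))"

definition ampliate :: "nat \<Rightarrow> nat \<Rightarrow> nat \<Rightarrow> (complex mat \<Rightarrow> complex mat) \<Rightarrow> complex mat \<Rightarrow> complex mat" where
  "ampliate k n m E X = mat (k*m) (k*m) (\<lambda>(p,q). E (block n (p div m) (q div m) X) $$ (p mod m, q mod m))"

definition cptp :: "nat \<Rightarrow> nat \<Rightarrow> (complex mat \<Rightarrow> complex mat) \<Rightarrow> bool" where
  "cptp n m E \<longleftrightarrow>
     (\<forall>X \<in> carrier_mat n n. E X \<in> carrier_mat m m) \<and>
     (\<forall>X \<in> carrier_mat n n. \<forall>Y \<in> carrier_mat n n. E (X + Y) = E X + E Y) \<and>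
     (\<forall>X \<in> carrier_mat n n. \<forall>c. E (c \<cdot>\<^sub>m X) = c \<cdot>\<^sub>m E X) \<and>
     (\<forall>X \<in> carrier_mat n n. mtrace (E X) = mtrace X) \<and>
     (\<forall>k>0. \<forall>X. psd (k*n) X \<longrightarrow> psd (k*m) (ampliate k n m E X))"

definition prop_a :: "(complex mat \<Rightarrow> complex mat \<Rightarrow> ereal) \<Rightarrow> bool" where
  "prop_a D \<longleftrightarrow> (\<forall>n m E S T. cptp n m E \<longrightarrow> psd n S \<longrightarrow> psd n T \<longrightarrow> D (E S) (E T) \<le> D S T)"

definition prop_b :: "(complex mat \<Rightarrow> complex mat \<Rightarrow> ereal) \<Rightarrow> bool" where
  "prop_b D \<longleftrightarrow> (\<forall>n m S T T'. psd n S \<longrightarrow> psd n T \<longrightarrow> psd m T' \<longrightarrow>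
      D (four_block_mat S (0\<^sub>m n m) (0\<^sub>m m n) (0\<^sub>m m m))
        (four_block_mat T (0\<^sub>m n m) (0\<^sub>m m n) T') = D S T)"

definition H_K1 :: "(complex mat \<Rightarrow> complex mat \<Rightarrow> ereal) \<Rightarrow> nat \<Rightarrow> nat \<Rightarrow> complex mat \<Rightarrow> ereal" where
  "H_K1 D dA dB \<rho> = - D \<rho> (kron (1\<^sub>m dA) (ptrace_A dA dB \<rho>))"

definition H_K2 :: "(complex mat \<Rightarrow> complex mat \<Rightarrow> ereal) \<Rightarrow> nat \<Rightarrow> nat \<Rightarrow> complex mat \<Rightarrow> ereal" where
  "H_K2 D dA dB \<rho> = (SUP \<sigma> \<in> {\<sigma>. density dB \<sigma>}. - D \<rho> (kron (1\<^sub>m dA) \<sigma>))"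

end

theory Submission
  imports Defs
begin

(*
  Write W = V_A \<otimes> V_B, P = W W\<^sup>\<dagger> and \<rho>' = W \<rho> W\<^sup>\<dagger>.  Two channels compare D on the two spaces:
  X \<mapsto> W\<^sup>\<dagger> X W \<oplus> (1 - P) X (1 - P) sends \<rho>' to \<rho> \<oplus> 0, and [Y, *; *, Z] \<mapsto> W Y W\<^sup>\<dagger> + Z sends
  \<rho> \<oplus> 0 back to \<rho>'.  With data processing and Property (b) they give D(\<rho> \<parallel> W\<^sup>\<dagger> X W) \<le> D(\<rho>' \<parallel> X)
  for every positive X, with equality when X commutes with P.  For X = 1 \<otimes> V_B \<sigma> V_B\<^sup>\<dagger> this
  identifies the relative entropies in both forms of H_K, the partial trace of \<rho>' being
  V_B \<rho>_B V_B\<^sup>\<dagger>.  In the optimised form a density operator \<sigma>' on B' only yields the subnormalised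
  V_B\<^sup>\<dagger> \<sigma>' V_B on B; padding it with a multiple of the identity gives a density operator and can
  only decrease D, which is antitone in its second argument (data processing for the channel
  adding the two diagonal blocks, plus Property (b)).
*)

abbreviation sandwich :: "complex mat \<Rightarrow> complex mat \<Rightarrow> complex mat" where
  "sandwich K X \<equiv> K * X * mat_adjoint K"

lemma sum_lessThan_mult: "(\<Sum>r<a * b. f r) = (\<Sum>x<a. \<Sum>y<b. f (x * b + y))" for b :: nat
proof -
  have "(\<Sum>r<a * b. f r) = (\<Sum>x<a. \<Sum>r\<in>{x * b..<x * b + b}. f r)"
    by (rule sum.nat_group[symmetric])
  then show ?thesis
    by (simp add: sum.atLeastLessThan_shift_0[where m = "_ * b"] atLeast0LessThan add.commute)
qed

lemma sum_lessThan_add: "(\<Sum>i<n + N. f i) = (\<Sum>i<n. f i) + (\<Sum>i<N. f (n + i))" for n N :: nat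
  by (induction N) (simp_all add: add.assoc)

lemma mult_add_less_mult:
  fixes a b A B :: nat
  assumes "a < A" "b < B"
  shows "a * B + b < A * B"
proof -
  have "a * B + b < (a + 1) * B"
    using assms(2) by simp
  also have "\<dots> \<le> A * B"
    using assms(1) by (intro mult_le_mono1) simp
  finally show ?thesis .
qed

lemma mult_add_div_mod [simp]:
  "y < b \<Longrightarrow> (x * b + y) div b = x" "y < b \<Longrightarrow> (x * b + y) mod b = y" for b :: nat
  by auto

lemma sum_lessThan_mult_div_eq:
  fixes n :: nat
  assumes "i < k"
  shows "(\<Sum>r<k * n. if r div n = i then h r else 0) = (\<Sum>a<n. h (i * n + a))"
proof -
  have "(\<Sum>r<k * n. if r div n = i then h r else 0)
      = (\<Sum>x<k. \<Sum>y<n. if (x * n + y) div n = i then h (x * n + y) else 0)"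
    by (rule sum_lessThan_mult)
  also have "\<dots> = (\<Sum>x<k. if x = i then (\<Sum>y<n. h (x * n + y)) else 0)"
    by (intro sum.cong refl) auto
  finally show ?thesis
    using assms by simp
qed

lemma mat_adjoint_dim [simp]:
  "dim_row (mat_adjoint A) = dim_col A" "dim_col (mat_adjoint (A :: complex mat)) = dim_row A"
  unfolding mat_adjoint_def by (simp_all add: mat_of_rows_def)

lemma mat_adjoint_index [simp]:
  "i < dim_col A \<Longrightarrow> j < dim_row A \<Longrightarrow> mat_adjoint (A :: complex mat) $$ (i, j) = cnj (A $$ (j, i))"
  unfolding mat_adjoint_def by (simp add: mat_of_rows_def)

lemma mat_adjoint_carrier [simp]:
  "(A :: complex mat) \<in> carrier_mat n m \<Longrightarrow> mat_adjoint A \<in> carrier_mat m n"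
  unfolding carrier_mat_def by simp

lemma mat_adjoint_mult:
  assumes "(A :: complex mat) \<in> carrier_mat n k" "B \<in> carrier_mat k m"
  shows "mat_adjoint (A * B) = mat_adjoint B * mat_adjoint A"
  by (rule eq_matI) (use assms in \<open>auto simp: scalar_prod_def sum_conjugate intro!: sum.cong\<close>)

lemma mat_adjoint_adjoint [simp]: "mat_adjoint (mat_adjoint (A :: complex mat)) = A"
  by (rule eq_matI) auto

lemma mat_adjoint_one [simp]: "mat_adjoint (1\<^sub>m n :: complex mat) = 1\<^sub>m n"
  by (rule eq_matI) auto

lemma mat_adjoint_minus:
  "(A :: complex mat) \<in> carrier_mat n m \<Longrightarrow> B \<in> carrier_mat n m \<Longrightarrow>
   mat_adjoint (A - B) = mat_adjoint A - mat_adjoint B"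
  by (rule eq_matI) auto

lemma adjoint_mult_self:
  assumes A: "(A :: complex mat) \<in> carrier_mat a b" and B: "B \<in> carrier_mat b c"
  shows "mat_adjoint (A * B) * (A * B) = mat_adjoint B * (mat_adjoint A * A) * B"
proof -
  have A': "mat_adjoint A \<in> carrier_mat b a" and B': "mat_adjoint B \<in> carrier_mat c b"
    using A B by auto
  have "mat_adjoint (A * B) * (A * B) = mat_adjoint B * (mat_adjoint A * (A * B))"
    using mat_adjoint_mult[OF A B] assoc_mult_mat[OF B' A' mult_carrier_mat[OF A B]] by simp
  also have "\<dots> = mat_adjoint B * (mat_adjoint A * A) * B"
    using assoc_mult_mat[OF A' A B] assoc_mult_mat[OF B' mult_carrier_mat[OF A' A] B] by simp
  finally show ?thesis .
qed

lemma sandwich_mult: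
  assumes A: "(A :: complex mat) \<in> carrier_mat a b" and B: "B \<in> carrier_mat b c"
    and X: "X \<in> carrier_mat c c"
  shows "sandwich (A * B) X = sandwich A (sandwich B X)"
proof -
  have A': "mat_adjoint A \<in> carrier_mat b a" and B': "mat_adjoint B \<in> carrier_mat c b"
    using A B by auto
  have BX: "B * X \<in> carrier_mat b c"
    using B X by simp
  have "sandwich (A * B) X = A * (B * X) * (mat_adjoint B * mat_adjoint A)"
    by (simp add: mat_adjoint_mult[OF A B] assoc_mult_mat[OF A B X])
  also have "\<dots> = A * ((B * X * mat_adjoint B) * mat_adjoint A)"
    using assoc_mult_mat[OF A BX mult_carrier_mat[OF B' A']] assoc_mult_mat[OF BX B' A'] by simp
  also have "\<dots> = sandwich A (sandwich B X)"
    using assoc_mult_mat[OF A mult_carrier_mat[OF BX B'] A'] by simp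
  finally show ?thesis .
qed

lemma isometry_carrier: "isometry n m V \<Longrightarrow> V \<in> carrier_mat m n"
  unfolding isometry_def by simp

lemma isometry_adjoint_mult: "isometry n m V \<Longrightarrow> mat_adjoint V * V = 1\<^sub>m n"
  unfolding isometry_def by simp

lemma isometry_range_proj_mult:
  assumes "isometry n m V" and M: "M \<in> carrier_mat n k"
  shows "V * mat_adjoint V * (V * M) = V * M"
proof -
  have V: "V \<in> carrier_mat m n" and V': "mat_adjoint V \<in> carrier_mat n m"
    using assms(1) by (auto dest: isometry_carrier)
  have "V * mat_adjoint V * (V * M) = V * ((mat_adjoint V * V) * M)"
    using assoc_mult_mat[OF V V' mult_carrier_mat[OF V M]] assoc_mult_mat[OF V' V M] by simp
  then show ?thesis
    using isometry_adjoint_mult[OF assms(1)] M by simp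
qed

lemma mult_isometry_range_proj:
  assumes "isometry n m V" and M: "M \<in> carrier_mat k n"
  shows "M * mat_adjoint V * (V * mat_adjoint V) = M * mat_adjoint V"
proof -
  have V: "V \<in> carrier_mat m n" and V': "mat_adjoint V \<in> carrier_mat n m"
    using assms(1) by (auto dest: isometry_carrier)
  have "M * mat_adjoint V * (V * mat_adjoint V) = M * (mat_adjoint V * V) * mat_adjoint V"
    using assoc_mult_mat[OF mult_carrier_mat[OF M V'] V V'] assoc_mult_mat[OF M V' V] by simp
  then show ?thesis
    using isometry_adjoint_mult[OF assms(1)] M by simp
qed

lemma adjoint_sandwich_isometry:
  assumes "isometry n m V" and M: "M \<in> carrier_mat n n"
  shows "mat_adjoint V * sandwich V M * V = M"
proof -
  have V: "V \<in> carrier_mat m n"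
    using assms(1) by (rule isometry_carrier)
  then show ?thesis
    using sandwich_mult[OF mat_adjoint_carrier[OF V] V M] isometry_adjoint_mult[OF assms(1)] M by simp
qed

lemma kron_dim [simp]:
  "dim_row (kron A B) = dim_row A * dim_row B" "dim_col (kron A B) = dim_col A * dim_col B"
  unfolding kron_def by simp_all

lemma kron_carrier [simp]:
  "A \<in> carrier_mat a1 a2 \<Longrightarrow> B \<in> carrier_mat b1 b2 \<Longrightarrow> kron A B \<in> carrier_mat (a1 * b1) (a2 * b2)"
  unfolding carrier_mat_def by simp

lemma kron_index [simp]:
  "i < dim_row A * dim_row B \<Longrightarrow> j < dim_col A * dim_col B \<Longrightarrow>
   kron A B $$ (i, j) = A $$ (i div dim_row B, j div dim_col B) * B $$ (i mod dim_row B, j mod dim_col B)"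
  unfolding kron_def by simp

lemma kron_mult:
  assumes A: "A \<in> carrier_mat a1 a2" and B: "B \<in> carrier_mat b1 b2"
    and C: "C \<in> carrier_mat a2 a3" and D: "D \<in> carrier_mat b2 b3"
  shows "kron A B * kron C D = kron (A * C) (B * D)"
proof (rule eq_matI)
  fix i j assume "i < dim_row (kron (A * C) (B * D))" "j < dim_col (kron (A * C) (B * D))"
  then have i: "i < a1 * b1" and j: "j < a3 * b3"
    using A B C D by auto
  then have "b1 > 0" "b3 > 0"
    by (auto intro: ccontr)
  moreover have "i div b1 < a1" "j div b3 < a3"
    using i j by (simp_all add: less_mult_imp_div_less)
  moreover have "(kron A B * kron C D) $$ (i, j)
      = (\<Sum>x<a2. \<Sum>y<b2. kron A B $$ (i, x * b2 + y) * kron C D $$ (x * b2 + y, j))"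
    using A B C D i j by (simp add: scalar_prod_def atLeast0LessThan sum_lessThan_mult del: kron_index)
  moreover have "\<dots> = (\<Sum>x<a2. \<Sum>y<b2. (A $$ (i div b1, x) * C $$ (x, j div b3))
                                         * (B $$ (i mod b1, y) * D $$ (y, j mod b3)))"
  proof (intro sum.cong refl)
    fix x y assume "x \<in> {..<a2}" "y \<in> {..<b2}"
    then have "x * b2 + y < a2 * b2"
      by (simp add: mult_add_less_mult)
    then show "kron A B $$ (i, x * b2 + y) * kron C D $$ (x * b2 + y, j)
        = (A $$ (i div b1, x) * C $$ (x, j div b3)) * (B $$ (i mod b1, y) * D $$ (y, j mod b3))"
      using A B C D i j \<open>y \<in> {..<b2}\<close> by simp
  qed
  ultimately show "(kron A B * kron C D) $$ (i, j) = kron (A * C) (B * D) $$ (i, j)"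
    using A B C D i j by (simp add: scalar_prod_def atLeast0LessThan sum_product)
qed (use A B C D in auto)

lemma kron_mult3:
  assumes "A \<in> carrier_mat a1 a2" "B \<in> carrier_mat b1 b2" "C \<in> carrier_mat a2 a3"
    "D \<in> carrier_mat b2 b3" "E \<in> carrier_mat a3 a4" "F \<in> carrier_mat b3 b4"
  shows "kron A B * kron C D * kron E F = kron (A * C * E) (B * D * F)"
  using assms by (simp add: kron_mult[of A a1 a2 B b1 b2 C a3 D b3]
      kron_mult[of "A * C" a1 a3 "B * D" b1 b3 E a4 F b4])

lemma mat_adjoint_kron: "mat_adjoint (kron A B) = kron (mat_adjoint A) (mat_adjoint B)"
proof (rule eq_matI)
  fix i j assume "i < dim_row (kron (mat_adjoint A) (mat_adjoint B))"
    "j < dim_col (kron (mat_adjoint A) (mat_adjoint B))"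
  then have i: "i < dim_col A * dim_col B" and j: "j < dim_row A * dim_row B"
    by auto
  then have "dim_col B > 0" "dim_row B > 0"
    by (auto intro: ccontr)
  moreover have "i div dim_col B < dim_col A" "j div dim_row B < dim_row A"
    using i j by (simp_all add: less_mult_imp_div_less)
  ultimately show "mat_adjoint (kron A B) $$ (i, j) = kron (mat_adjoint A) (mat_adjoint B) $$ (i, j)"
    using i j by simp
qed auto

lemma kron_one_one [simp]: "kron (1\<^sub>m a) (1\<^sub>m b) = (1\<^sub>m (a * b) :: complex mat)"
proof (rule eq_matI)
  fix i j assume "i < dim_row (1\<^sub>m (a * b) :: complex mat)" "j < dim_col (1\<^sub>m (a * b) :: complex mat)"
  then have i: "i < a * b" and j: "j < a * b"
    by auto
  then have "b > 0"
    by (auto intro: ccontr)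
  moreover have "i div b < a" "j div b < a"
    using i j by (auto simp: less_mult_imp_div_less)
  moreover have "(i div b = j div b \<and> i mod b = j mod b) = (i = j)"
    by (metis div_mult_mod_eq)
  ultimately show "kron (1\<^sub>m a) (1\<^sub>m b) $$ (i, j) = (1\<^sub>m (a * b) :: complex mat) $$ (i, j)"
    using i j by auto
qed auto

lemma isometry_kron:
  assumes "isometry dA dA' VA" "isometry dB dB' VB"
  shows "isometry (dA * dB) (dA' * dB') (kron VA VB)"
  using assms kron_mult[of "mat_adjoint VA" dA dA' "mat_adjoint VB" dB dB' VA dA VB dB]
  unfolding isometry_def mat_adjoint_kron by auto

lemma kron_one_index:
  assumes "K \<in> carrier_mat m n" "t < k * m" "r < k * n"
  shows "kron (1\<^sub>m k) K $$ (t, r) = (if r div n = t div m then K $$ (t mod m, r mod n) else 0)"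
proof -
  have "n > 0" "m > 0"
    using assms by (auto intro: ccontr)
  then have "r div n < k" "t div m < k"
    using assms by (auto simp: less_mult_imp_div_less)
  then show ?thesis
    using assms by auto
qed

lemma kron_add_right:
  assumes "B \<in> carrier_mat b1 b2" "C \<in> carrier_mat b1 b2"
  shows "kron A (B + C) = kron A B + kron A C"
proof (rule eq_matI)
  fix i j assume "i < dim_row (kron A B + kron A C)" "j < dim_col (kron A B + kron A C)"
  then have i: "i < dim_row A * b1" and j: "j < dim_col A * b2"
    using assms by auto
  then have "b1 > 0" "b2 > 0"
    by (auto intro: ccontr)
  then show "kron A (B + C) $$ (i, j) = (kron A B + kron A C) $$ (i, j)"
    using assms i j by (simp add: algebra_simps)
qed (use assms in auto)

lemma mtrace_mult_comm:
  assumes "A \<in> carrier_mat n m" "B \<in> carrier_mat m n"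
  shows "mtrace (A * B) = mtrace (B * A)"
proof -
  have "mtrace (A * B) = (\<Sum>i<n. \<Sum>k<m. A $$ (i, k) * B $$ (k, i))"
    using assms unfolding mtrace_def by (simp add: scalar_prod_def atLeast0LessThan)
  also have "\<dots> = (\<Sum>k<m. \<Sum>i<n. B $$ (k, i) * A $$ (i, k))"
    by (subst sum.swap) (simp add: mult.commute)
  also have "\<dots> = mtrace (B * A)"
    using assms unfolding mtrace_def by (simp add: scalar_prod_def atLeast0LessThan)
  finally show ?thesis .
qed

lemma mtrace_add: "A \<in> carrier_mat n n \<Longrightarrow> B \<in> carrier_mat n n \<Longrightarrow> mtrace (A + B) = mtrace A + mtrace B"
  unfolding mtrace_def by (simp add: sum.distrib)

lemma mtrace_smult_one [simp]: "mtrace (c \<cdot>\<^sub>m 1\<^sub>m n) = c * of_nat n"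
  unfolding mtrace_def by simp

lemma mtrace_sandwich:
  assumes K: "K \<in> carrier_mat m n" and X: "X \<in> carrier_mat n n"
  shows "mtrace (sandwich K X) = mtrace (mat_adjoint K * K * X)"
proof -
  have K': "mat_adjoint K \<in> carrier_mat n m"
    using K by simp
  have "mtrace (sandwich K X) = mtrace (mat_adjoint K * (K * X))"
    by (rule mtrace_mult_comm[of _ m n]) (use K X K' in auto)
  then show ?thesis
    using assoc_mult_mat[OF K' K X] by simp
qed

lemma mtrace_four_block_mat:
  assumes A: "A \<in> carrier_mat n n" and D: "D \<in> carrier_mat N N"
  shows "mtrace (four_block_mat A B C D) = mtrace A + mtrace D"
  using A D unfolding mtrace_def by (simp add: sum_lessThan_add)

lemma complex_nonneg_iff: "0 \<le> z \<longleftrightarrow> z \<in> \<real> \<and> 0 \<le> Re z" for z :: complex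
  by (auto simp: less_eq_complex_def complex_is_Real_iff)

lemma psd_iff:
  "psd n A \<longleftrightarrow> A \<in> carrier_mat n n \<and> (\<forall>v \<in> carrier_vec n. 0 \<le> conjugate v \<bullet> (A *\<^sub>v v))"
  unfolding psd_def complex_nonneg_iff ..

lemma psdI:
  "A \<in> carrier_mat n n \<Longrightarrow> (\<And>v. v \<in> carrier_vec n \<Longrightarrow> 0 \<le> conjugate v \<bullet> (A *\<^sub>v v)) \<Longrightarrow> psd n A"
  unfolding psd_iff by blast

lemma psd_carrier: "psd n A \<Longrightarrow> A \<in> carrier_mat n n"
  unfolding psd_def by simp

lemma psd_quadratic_form_nonneg: "psd n A \<Longrightarrow> v \<in> carrier_vec n \<Longrightarrow> 0 \<le> conjugate v \<bullet> (A *\<^sub>v v)"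
  unfolding psd_iff by blast

lemma quadratic_form_sum:
  assumes "(A :: complex mat) \<in> carrier_mat n n" "v \<in> carrier_vec n"
  shows "conjugate v \<bullet> (A *\<^sub>v v) = (\<Sum>i<n. \<Sum>j<n. cnj (v $ i) * A $$ (i, j) * v $ j)"
  using assms by (auto simp: scalar_prod_def atLeast0LessThan sum_distrib_left mult.assoc intro!: sum.cong)

lemma scalar_prod_adjoint:
  assumes "(K :: complex mat) \<in> carrier_mat m n" "v \<in> carrier_vec m" "w \<in> carrier_vec n"
  shows "conjugate v \<bullet> (K *\<^sub>v w) = conjugate (mat_adjoint K *\<^sub>v v) \<bullet> w"
proof -
  have "conjugate v \<bullet> (K *\<^sub>v w) = (\<Sum>i<m. \<Sum>j<n. cnj (v $ i) * K $$ (i, j) * w $ j)"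
    using assms by (auto simp: scalar_prod_def atLeast0LessThan sum_distrib_left mult.assoc intro!: sum.cong)
  also have "\<dots> = (\<Sum>j<n. cnj (\<Sum>i<m. cnj (K $$ (i, j)) * v $ i) * w $ j)"
    by (subst sum.swap) (simp add: sum_conjugate sum_distrib_left sum_distrib_right mult_ac)
  also have "\<dots> = conjugate (mat_adjoint K *\<^sub>v v) \<bullet> w"
    using assms by (auto simp: scalar_prod_def atLeast0LessThan intro!: sum.cong)
  finally show ?thesis .
qed

lemma psd_sandwich:
  assumes A: "psd n A" and K: "(K :: complex mat) \<in> carrier_mat m n"
  shows "psd m (sandwich K A)"
proof (rule psdI)
  have A': "A \<in> carrier_mat n n" and K': "mat_adjoint K \<in> carrier_mat n m"
    using A K by (auto dest: psd_carrier)
  then show "sandwich K A \<in> carrier_mat m m"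
    using mult_carrier_mat[OF mult_carrier_mat[OF K] K'] by blast
  fix v :: "complex vec" assume v: "v \<in> carrier_vec m"
  define u where "u = mat_adjoint K *\<^sub>v v"
  have u: "u \<in> carrier_vec n"
    unfolding u_def using K' v by simp
  have "sandwich K A *\<^sub>v v = K *\<^sub>v (A *\<^sub>v u)"
    using assoc_mult_mat_vec[OF mult_carrier_mat[OF K A'] K' v] assoc_mult_mat_vec[OF K A' u]
    unfolding u_def by simp
  then have "conjugate v \<bullet> (sandwich K A *\<^sub>v v) = conjugate u \<bullet> (A *\<^sub>v u)"
    unfolding u_def using scalar_prod_adjoint[OF K v, of "A *\<^sub>v u"] A' u by (simp add: u_def)
  then show "0 \<le> conjugate v \<bullet> (sandwich K A *\<^sub>v v)"
    using psd_quadratic_form_nonneg[OF A u] by simp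
qed

lemma psd_add:
  assumes "psd n A" "psd n B"
  shows "psd n (A + B)"
proof (rule psdI)
  have A: "A \<in> carrier_mat n n" and B: "B \<in> carrier_mat n n"
    using assms by (auto dest: psd_carrier)
  then show "A + B \<in> carrier_mat n n"
    by simp
  fix v :: "complex vec" assume v: "v \<in> carrier_vec n"
  have "conjugate v \<bullet> ((A + B) *\<^sub>v v) = conjugate v \<bullet> (A *\<^sub>v v) + conjugate v \<bullet> (B *\<^sub>v v)"
    using A B v by (simp add: add_mult_distrib_mat_vec scalar_prod_add_distrib[of _ n])
  then show "0 \<le> conjugate v \<bullet> ((A + B) *\<^sub>v v)"
    using assms v by (simp add: psd_quadratic_form_nonneg)
qed

lemma psd_smult_one:
  assumes "0 \<le> c"
  shows "psd n (c \<cdot>\<^sub>m 1\<^sub>m n)"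
proof (rule psdI)
  fix v :: "complex vec" assume v: "v \<in> carrier_vec n"
  have "conjugate v \<bullet> ((c \<cdot>\<^sub>m 1\<^sub>m n) *\<^sub>v v) = (\<Sum>i<n. c * (v $ i * conjugate (v $ i)))"
    unfolding quadratic_form_sum[OF smult_carrier_mat[OF one_carrier_mat] v]
  proof (rule sum.cong[OF refl])
    fix i assume "i \<in> {..<n}"
    then have "(\<Sum>j<n. cnj (v $ i) * (c \<cdot>\<^sub>m 1\<^sub>m n) $$ (i, j) * v $ j)
        = (\<Sum>j<n. if j = i then c * (v $ i * conjugate (v $ i)) else 0)"
      by (intro sum.cong refl) auto
    then show "(\<Sum>j<n. cnj (v $ i) * (c \<cdot>\<^sub>m 1\<^sub>m n) $$ (i, j) * v $ j) = c * (v $ i * conjugate (v $ i))"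
      using \<open>i \<in> {..<n}\<close> by simp
  qed
  then show "0 \<le> conjugate v \<bullet> ((c \<cdot>\<^sub>m 1\<^sub>m n) *\<^sub>v v)"
    using conjugate_square_positive[where 'a = complex] by (simp add: sum_nonneg mult_nonneg_nonneg[OF assms])
qed simp

lemma psd_zero: "psd n (0\<^sub>m n n)"
proof -
  have "0 \<cdot>\<^sub>m 1\<^sub>m n = (0\<^sub>m n n :: complex mat)"
    by (rule eq_matI) auto
  then show ?thesis
    using psd_smult_one[of 0 n] by simp
qed

lemma mtrace_psd_nonneg:
  assumes "psd n A"
  shows "0 \<le> mtrace A"
proof -
  have A: "A \<in> carrier_mat n n"
    using assms by (rule psd_carrier)
  have "A $$ (k, k) = conjugate (unit_vec n k) \<bullet> (A *\<^sub>v unit_vec n k)" if "k < n" for k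
  proof -
    have "conjugate (unit_vec n k) = (unit_vec n k :: complex vec)"
      by (rule eq_vecI) (auto simp: unit_vec_def)
    then show ?thesis
      using A that by simp
  qed
  then have "mtrace A = (\<Sum>k<n. conjugate (unit_vec n k) \<bullet> (A *\<^sub>v unit_vec n k))"
    using A unfolding mtrace_def by simp
  then show ?thesis
    using assms by (simp add: sum_nonneg psd_quadratic_form_nonneg)
qed

lemma psd_kron_one:
  assumes S: "psd m \<sigma>"
  shows "psd (k * m) (kron (1\<^sub>m k) \<sigma>)"
proof (rule psdI)
  have Sc: "\<sigma> \<in> carrier_mat m m"
    using S by (rule psd_carrier)
  show Kc: "kron (1\<^sub>m k) \<sigma> \<in> carrier_mat (k * m) (k * m)"
    using Sc by simp
  fix v :: "complex vec" assume v: "v \<in> carrier_vec (k * m)"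
  define w where "w a = vec m (\<lambda>b. v $ (a * m + b))" for a
  have w: "w a \<in> carrier_vec m" for a
    unfolding w_def by simp
  have "conjugate v \<bullet> (kron (1\<^sub>m k) \<sigma> *\<^sub>v v)
      = (\<Sum>p<k * m. \<Sum>q<k * m. if q div m = p div m then cnj (v $ p) * \<sigma> $$ (p mod m, q mod m) * v $ q else 0)"
    unfolding quadratic_form_sum[OF Kc v]
    by (intro sum.cong refl) (simp add: kron_one_index[OF Sc] del: kron_index)
  also have "\<dots> = (\<Sum>p<k * m. \<Sum>b<m. cnj (v $ p) * \<sigma> $$ (p mod m, b) * v $ ((p div m) * m + b))"
  proof (rule sum.cong[OF refl])
    fix p assume "p \<in> {..<k * m}"
    then have "p div m < k"
      by (auto simp: less_mult_imp_div_less)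
    then show "(\<Sum>q<k * m. if q div m = p div m then cnj (v $ p) * \<sigma> $$ (p mod m, q mod m) * v $ q else 0)
        = (\<Sum>b<m. cnj (v $ p) * \<sigma> $$ (p mod m, b) * v $ ((p div m) * m + b))"
      by (subst sum_lessThan_mult_div_eq) (auto intro!: sum.cong)
  qed
  also have "\<dots> = (\<Sum>a<k. conjugate (w a) \<bullet> (\<sigma> *\<^sub>v w a))"
    by (subst sum_lessThan_mult, rule sum.cong[OF refl], subst quadratic_form_sum[OF Sc w])
      (auto simp: w_def intro!: sum.cong)
  finally show "0 \<le> conjugate v \<bullet> (kron (1\<^sub>m k) \<sigma> *\<^sub>v v)"
    using S w by (simp add: sum_nonneg psd_quadratic_form_nonneg)
qed

lemma density_dim_pos: "density n \<rho> \<Longrightarrow> 0 < n"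
  unfolding density_def by (cases n) (auto simp: mtrace_def dest: psd_carrier)

lemma density_pad:
  assumes "psd n S" "0 < n" "0 \<le> t" "mtrace S + t = 1"
  shows "density n (S + (t / of_nat n) \<cdot>\<^sub>m 1\<^sub>m n)"
  unfolding density_def
proof
  show "psd n (S + (t / of_nat n) \<cdot>\<^sub>m 1\<^sub>m n)"
    using assms(1,3) by (intro psd_add psd_smult_one) (auto simp: complex_nonneg_iff)
  show "mtrace (S + (t / of_nat n) \<cdot>\<^sub>m 1\<^sub>m n) = 1"
    using assms by (simp add: mtrace_add[of _ n] psd_carrier)
qed

section \<open>Completely positive maps in Kraus form\<close>

lemma mult3_index:
  assumes "A \<in> carrier_mat a b" "B \<in> carrier_mat b c" "C \<in> carrier_mat c d" "i < a" "j < d"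
  shows "(A * B * C) $$ (i, j) = (\<Sum>s<c. (\<Sum>r<b. A $$ (i, r) * B $$ (r, s)) * C $$ (s, j))"
  using assms by (simp del: assoc_mult_mat add: scalar_prod_def atLeast0LessThan)

lemma sandwich_carrier:
  "(K :: complex mat) \<in> carrier_mat m n \<Longrightarrow> X \<in> carrier_mat n n \<Longrightarrow> sandwich K X \<in> carrier_mat m m"
  by (meson mat_adjoint_carrier mult_carrier_mat)

lemma sandwich_add:
  assumes K: "(K :: complex mat) \<in> carrier_mat m n" and X: "X \<in> carrier_mat n n" and Y: "Y \<in> carrier_mat n n"
  shows "sandwich K (X + Y) = sandwich K X + sandwich K Y"
  using K X Y by (simp add: mult_add_distrib_mat[OF K X Y] add_mult_distrib_mat[of _ m n _ _ m])

lemma sandwich_smult: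
  assumes K: "(K :: complex mat) \<in> carrier_mat m n" and X: "X \<in> carrier_mat n n"
  shows "sandwich K (c \<cdot>\<^sub>m X) = c \<cdot>\<^sub>m sandwich K X"
  using K X by (simp add: mult_smult_distrib[OF K X] mult_smult_assoc_mat[of _ m n _ m])

lemma block_carrier [simp]: "block n i j X \<in> carrier_mat n n"
  unfolding block_def by simp

lemma block_index [simp]: "a < n \<Longrightarrow> b < n \<Longrightarrow> block n i j X $$ (a, b) = X $$ (i * n + a, j * n + b)"
  unfolding block_def by simp

lemma ampliate_dim [simp]: "dim_row (ampliate k n m E X) = k * m" "dim_col (ampliate k n m E X) = k * m"
  unfolding ampliate_def by simp_all

lemma ampliate_index:
  "p < k * m \<Longrightarrow> q < k * m \<Longrightarrow>
   ampliate k n m E X $$ (p, q) = E (block n (p div m) (q div m) X) $$ (p mod m, q mod m)"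
  unfolding ampliate_def by simp

lemma ampliate_add:
  assumes "\<And>Y. Y \<in> carrier_mat n n \<Longrightarrow> E1 Y \<in> carrier_mat m m"
    "\<And>Y. Y \<in> carrier_mat n n \<Longrightarrow> E2 Y \<in> carrier_mat m m"
  shows "ampliate k n m (\<lambda>Y. E1 Y + E2 Y) X = ampliate k n m E1 X + ampliate k n m E2 X"
proof (rule eq_matI)
  fix p q assume "p < dim_row (ampliate k n m E1 X + ampliate k n m E2 X)"
    "q < dim_col (ampliate k n m E1 X + ampliate k n m E2 X)"
  then have p: "p < k * m" and q: "q < k * m"
    by auto
  then have "0 < m"
    by (cases m) auto
  then have "p mod m < m" "q mod m < m"
    by simp_all
  then show "ampliate k n m (\<lambda>Y. E1 Y + E2 Y) X $$ (p, q)
      = (ampliate k n m E1 X + ampliate k n m E2 X) $$ (p, q)"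
    using p q assms[of "block n (p div m) (q div m) X"] by (simp add: ampliate_index)
qed auto

lemma ampliate_sandwich:
  assumes K: "K \<in> carrier_mat m n" and X: "X \<in> carrier_mat (k * n) (k * n)"
  shows "ampliate k n m (sandwich K) X = sandwich (kron (1\<^sub>m k) K) X"
proof (rule eq_matI)
  have KK: "kron (1\<^sub>m k) K \<in> carrier_mat (k * m) (k * n)"
    using K by simp
  fix p q assume "p < dim_row (sandwich (kron (1\<^sub>m k) K) X)" "q < dim_col (sandwich (kron (1\<^sub>m k) K) X)"
  then have p: "p < k * m" and q: "q < k * m"
    using K by auto
  then have pd: "p div m < k" and qd: "q div m < k"
    by (auto simp: less_mult_imp_div_less)
  have "0 < m"
    using p by (cases m) auto
  then have pm: "p mod m < m" and qm: "q mod m < m"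
    by simp_all
  have row: "(\<Sum>r<k * n. kron (1\<^sub>m k) K $$ (p, r) * X $$ (r, s))
      = (\<Sum>a<n. K $$ (p mod m, a) * X $$ ((p div m) * n + a, s))" for s
  proof -
    have "(\<Sum>r<k * n. kron (1\<^sub>m k) K $$ (p, r) * X $$ (r, s))
        = (\<Sum>r<k * n. if r div n = p div m then K $$ (p mod m, r mod n) * X $$ (r, s) else 0)"
      by (intro sum.cong refl) (simp add: kron_one_index[OF K p] del: kron_index)
    then show ?thesis
      by (auto simp: sum_lessThan_mult_div_eq[OF pd] intro!: sum.cong)
  qed
  have "ampliate k n m (sandwich K) X $$ (p, q)
      = (\<Sum>b<n. (\<Sum>a<n. K $$ (p mod m, a) * X $$ ((p div m) * n + a, (q div m) * n + b))
                    * cnj (K $$ (q mod m, b)))"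
    using p q K qm
    by (auto simp: ampliate_index mult3_index[OF K block_carrier mat_adjoint_carrier[OF K] pm qm]
        intro!: sum.cong)
  also have "\<dots> = (\<Sum>s<k * n. (\<Sum>r<k * n. kron (1\<^sub>m k) K $$ (p, r) * X $$ (r, s))
                                 * mat_adjoint (kron (1\<^sub>m k) K) $$ (s, q))"
  proof -
    have "(\<Sum>s<k * n. (\<Sum>r<k * n. kron (1\<^sub>m k) K $$ (p, r) * X $$ (r, s))
                      * mat_adjoint (kron (1\<^sub>m k) K) $$ (s, q))
        = (\<Sum>s<k * n. if s div n = q div m then (\<Sum>a<n. K $$ (p mod m, a) * X $$ ((p div m) * n + a, s))
                                               * cnj (K $$ (q mod m, s mod n)) else 0)"
      using K q by (intro sum.cong refl) (simp add: row kron_one_index[OF K q] del: kron_index)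
    then show ?thesis
      by (auto simp: sum_lessThan_mult_div_eq[OF qd] intro!: sum.cong)
  qed
  also have "\<dots> = sandwich (kron (1\<^sub>m k) K) X $$ (p, q)"
    by (rule mult3_index[OF KK X mat_adjoint_carrier[OF KK] p q, symmetric])
  finally show "ampliate k n m (sandwich K) X $$ (p, q) = sandwich (kron (1\<^sub>m k) K) X $$ (p, q)" .
qed (use K in auto)

lemma cptp_kraus2:
  assumes K1: "K1 \<in> carrier_mat m n" and K2: "K2 \<in> carrier_mat m n"
    and complete: "mat_adjoint K1 * K1 + mat_adjoint K2 * K2 = 1\<^sub>m n"
  shows "cptp n m (\<lambda>X. sandwich K1 X + sandwich K2 X)"
  unfolding cptp_def
proof (intro conjI ballI allI impI)
  fix X :: "complex mat" assume X: "X \<in> carrier_mat n n"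
  have S1: "sandwich K1 X \<in> carrier_mat m m" and S2: "sandwich K2 X \<in> carrier_mat m m"
    using K1 K2 X by (simp_all add: sandwich_carrier)
  then show "sandwich K1 X + sandwich K2 X \<in> carrier_mat m m"
    by simp
  show "sandwich K1 (X + Y) + sandwich K2 (X + Y)
      = sandwich K1 X + sandwich K2 X + (sandwich K1 Y + sandwich K2 Y)"
    if Y: "Y \<in> carrier_mat n n" for Y
    using S1 S2 sandwich_carrier[OF K1 Y] sandwich_carrier[OF K2 Y]
    unfolding sandwich_add[OF K1 X Y] sandwich_add[OF K2 X Y] by (intro eq_matI) auto
  show "sandwich K1 (c \<cdot>\<^sub>m X) + sandwich K2 (c \<cdot>\<^sub>m X) = c \<cdot>\<^sub>m (sandwich K1 X + sandwich K2 X)" for c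
    using S1 S2 by (simp add: sandwich_smult[OF K1 X] sandwich_smult[OF K2 X] add_smult_distrib_left_mat)
  have A1: "mat_adjoint K1 * K1 \<in> carrier_mat n n" and A2: "mat_adjoint K2 * K2 \<in> carrier_mat n n"
    using K1 K2 by (meson mat_adjoint_carrier mult_carrier_mat)+
  have "mtrace (sandwich K1 X + sandwich K2 X) = mtrace (mat_adjoint K1 * K1 * X + mat_adjoint K2 * K2 * X)"
    using S1 S2 A1 A2 X
    by (simp add: mtrace_add[of _ m] mtrace_add[of _ n] mtrace_sandwich[OF K1 X] mtrace_sandwich[OF K2 X])
  also have "mat_adjoint K1 * K1 * X + mat_adjoint K2 * K2 * X = X"
    using complete X by (simp add: add_mult_distrib_mat[OF A1 A2 X, symmetric])
  finally show "mtrace (sandwich K1 X + sandwich K2 X) = mtrace X" .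
next
  fix k and X :: "complex mat" assume X: "psd (k * n) X"
  have Xc: "X \<in> carrier_mat (k * n) (k * n)"
    using X by (rule psd_carrier)
  have "ampliate k n m (\<lambda>X. sandwich K1 X + sandwich K2 X) X
      = sandwich (kron (1\<^sub>m k) K1) X + sandwich (kron (1\<^sub>m k) K2) X"
    using K1 K2 Xc by (simp add: ampliate_add sandwich_carrier ampliate_sandwich)
  then show "psd (k * m) (ampliate k n m (\<lambda>X. sandwich K1 X + sandwich K2 X) X)"
    using K1 K2 by (simp add: psd_add psd_sandwich[OF X])
qed

section \<open>Two channels attached to an isometry\<close>

definition embed_upper :: "nat \<Rightarrow> nat \<Rightarrow> complex mat" where
  "embed_upper n N = mat (n + N) n (\<lambda>(i, j). if i = j then 1 else 0)"

definition embed_lower :: "nat \<Rightarrow> nat \<Rightarrow> complex mat" where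
  "embed_lower n N = mat (n + N) N (\<lambda>(i, j). if i = j + n then 1 else 0)"

lemma embed_carrier [simp]:
  "embed_upper n N \<in> carrier_mat (n + N) n" "embed_lower n N \<in> carrier_mat (n + N) N"
  unfolding embed_upper_def embed_lower_def by simp_all

lemma embed_dim [simp]:
  "dim_row (embed_upper n N) = n + N" "dim_col (embed_upper n N) = n"
  "dim_row (embed_lower n N) = n + N" "dim_col (embed_lower n N) = N"
  unfolding embed_upper_def embed_lower_def by simp_all

lemma embed_index [simp]:
  "i < n + N \<Longrightarrow> j < n \<Longrightarrow> embed_upper n N $$ (i, j) = (if i = j then 1 else 0)"
  "i < n + N \<Longrightarrow> j < N \<Longrightarrow> embed_lower n N $$ (i, j) = (if i = j + n then 1 else 0)"
  unfolding embed_upper_def embed_lower_def by simp_all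

lemma if_zero_one_mult [simp]:
  "(if P then 1 else 0) * (x :: complex) = (if P then x else 0)"
  "x * (if P then 1 else 0) = (if P then x else 0)"
  "cnj (if P then 1 else 0) = (if P then 1 else 0)"
  by auto

lemma sum_if_eq_add:
  "(\<Sum>r<N. if i = r + n then f r else 0) = (if n \<le> i \<and> i - n < N then f (i - n) else 0)" for n :: nat
proof -
  have "(\<Sum>r<N. if i = r + n then f r else 0) = (\<Sum>r<N. if r = i - n \<and> n \<le> i then f r else 0)"
    by (intro sum.cong refl) auto
  then show ?thesis
    by (cases "n \<le> i") (simp_all add: sum.delta)
qed

lemma compress_upper_four_block_mat:
  assumes A: "A \<in> carrier_mat n n" and B: "B \<in> carrier_mat n N"
    and C: "C \<in> carrier_mat N n" and D: "D \<in> carrier_mat N N"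
  shows "mat_adjoint (embed_upper n N) * four_block_mat A B C D * embed_upper n N = A"
proof (rule eq_matI)
  fix i j assume "i < dim_row A" "j < dim_col A"
  then have i: "i < n" and j: "j < n"
    using A by auto
  then show "(mat_adjoint (embed_upper n N) * four_block_mat A B C D * embed_upper n N) $$ (i, j)
      = A $$ (i, j)"
    using A D by (subst mult3_index[OF mat_adjoint_carrier[OF embed_carrier(1)] four_block_carrier_mat[OF A D]
        embed_carrier(1) i j]) (simp add: sum.delta cong: sum.cong_simp)
qed (use A in auto)

lemma compress_lower_four_block_mat:
  assumes A: "A \<in> carrier_mat n n" and B: "B \<in> carrier_mat n N"
    and C: "C \<in> carrier_mat N n" and D: "D \<in> carrier_mat N N"
  shows "mat_adjoint (embed_lower n N) * four_block_mat A B C D * embed_lower n N = D"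
proof (rule eq_matI)
  fix i j assume "i < dim_row D" "j < dim_col D"
  then have i: "i < N" and j: "j < N"
    using D by auto
  then show "(mat_adjoint (embed_lower n N) * four_block_mat A B C D * embed_lower n N) $$ (i, j)
      = D $$ (i, j)"
    using A D by (subst mult3_index[OF mat_adjoint_carrier[OF embed_carrier(2)] four_block_carrier_mat[OF A D]
        embed_carrier(2) i j]) (simp add: sum.delta cong: sum.cong_simp)
qed (use D in auto)

lemma four_block_diag_sandwich_embed:
  assumes A: "A \<in> carrier_mat n n" and D: "D \<in> carrier_mat N N"
  shows "sandwich (embed_upper n N) A + sandwich (embed_lower n N) D
    = four_block_mat A (0\<^sub>m n N) (0\<^sub>m N n) D"
proof (rule eq_matI)
  fix i j assume "i < dim_row (four_block_mat A (0\<^sub>m n N) (0\<^sub>m N n) D)"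
    "j < dim_col (four_block_mat A (0\<^sub>m n N) (0\<^sub>m N n) D)"
  then have i: "i < n + N" and j: "j < n + N"
    using A D by auto
  have "sandwich (embed_upper n N) A $$ (i, j) = (if i < n \<and> j < n then A $$ (i, j) else 0)"
    by (subst mult3_index[OF embed_carrier(1) A mat_adjoint_carrier[OF embed_carrier(1)] i j])
      (use i j in \<open>simp add: sum.delta' cong: sum.cong_simp\<close>)
  moreover have "sandwich (embed_lower n N) D $$ (i, j)
      = (if n \<le> i \<and> n \<le> j then D $$ (i - n, j - n) else 0)"
    by (subst mult3_index[OF embed_carrier(2) D mat_adjoint_carrier[OF embed_carrier(2)] i j])
      (use i j in \<open>auto simp: sum_if_eq_add cong: sum.cong_simp\<close>)
  ultimately show "(sandwich (embed_upper n N) A + sandwich (embed_lower n N) D) $$ (i, j)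
      = four_block_mat A (0\<^sub>m n N) (0\<^sub>m N n) D $$ (i, j)"
    using A D i j by auto
qed (use A D in auto)

lemma isometry_embed:
  "isometry n (n + N) (embed_upper n N)" "isometry N (n + N) (embed_lower n N)"
  using compress_upper_four_block_mat[of "1\<^sub>m n" n "0\<^sub>m n N" N "0\<^sub>m N n" "1\<^sub>m N"]
    compress_lower_four_block_mat[of "1\<^sub>m n" n "0\<^sub>m n N" N "0\<^sub>m N n" "1\<^sub>m N"]
  unfolding isometry_def by simp_all

lemma embed_complete:
  "embed_upper n N * mat_adjoint (embed_upper n N) + embed_lower n N * mat_adjoint (embed_lower n N)
   = 1\<^sub>m (n + N)"
  using four_block_diag_sandwich_embed[of "1\<^sub>m n" n "1\<^sub>m N" N] by simp

lemma psd_four_block_diag: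
  assumes "psd n S" "psd N T"
  shows "psd (n + N) (four_block_mat S (0\<^sub>m n N) (0\<^sub>m N n) T)"
proof -
  have "four_block_mat S (0\<^sub>m n N) (0\<^sub>m N n) T
      = sandwich (embed_upper n N) S + sandwich (embed_lower n N) T"
    by (rule four_block_diag_sandwich_embed[symmetric]) (use assms in \<open>auto dest: psd_carrier\<close>)
  then show ?thesis
    using psd_add[OF psd_sandwich[OF assms(1) embed_carrier(1)] psd_sandwich[OF assms(2) embed_carrier(2)]]
    by simp
qed

lemma compress_carrier:
  "(W :: complex mat) \<in> carrier_mat N n \<Longrightarrow> X \<in> carrier_mat N N \<Longrightarrow> mat_adjoint W * X * W \<in> carrier_mat n n"
  using sandwich_carrier[of "mat_adjoint W" n N X] by simp

definition compl_proj :: "complex mat \<Rightarrow> complex mat" where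
  "compl_proj W = 1\<^sub>m (dim_row W) - W * mat_adjoint W"

lemma compl_proj_carrier: "W \<in> carrier_mat N n \<Longrightarrow> compl_proj W \<in> carrier_mat N N"
  unfolding compl_proj_def by auto

lemma mat_adjoint_compl_proj: "W \<in> carrier_mat N n \<Longrightarrow> mat_adjoint (compl_proj W) = compl_proj W"
  unfolding compl_proj_def
  by (subst mat_adjoint_minus[of _ N N]) (auto simp: mat_adjoint_mult[of W N n "mat_adjoint W" N])

lemma compl_proj_mult_isometry:
  assumes "isometry n N W"
  shows "compl_proj W * W = 0\<^sub>m N n"
proof -
  have W: "W \<in> carrier_mat N n"
    using assms by (rule isometry_carrier)
  have "compl_proj W * W = W - W * mat_adjoint W * W"
    unfolding compl_proj_def using W by (simp add: minus_mult_distrib_mat[of _ N N])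
  also have "W * mat_adjoint W * W = W"
    using isometry_range_proj_mult[OF assms, of "1\<^sub>m n" n] W by simp
  finally show ?thesis
    using W by simp
qed

lemma compl_proj_idem:
  assumes "isometry n N W"
  shows "compl_proj W * compl_proj W = compl_proj W"
proof -
  have W: "W \<in> carrier_mat N n" and W': "mat_adjoint W \<in> carrier_mat n N"
    and R: "compl_proj W \<in> carrier_mat N N"
    using assms by (auto simp: compl_proj_carrier dest: isometry_carrier)
  have R_eq: "compl_proj W = 1\<^sub>m N - W * mat_adjoint W"
    using W by (simp add: compl_proj_def)
  have "compl_proj W * compl_proj W = compl_proj W * 1\<^sub>m N - compl_proj W * (W * mat_adjoint W)"
    by (subst (2) R_eq) (rule mult_minus_distrib_mat[OF R one_carrier_mat mult_carrier_mat[OF W W']])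
  also have "compl_proj W * (W * mat_adjoint W) = 0\<^sub>m N N"
    using assoc_mult_mat[OF R W W'] compl_proj_mult_isometry[OF assms] left_mult_zero_mat[OF W'] by simp
  finally show ?thesis
    using R by (intro eq_matI) auto
qed

definition merge_channel :: "complex mat \<Rightarrow> complex mat \<Rightarrow> complex mat" where
  "merge_channel W X =
     sandwich (W * mat_adjoint (embed_upper (dim_col W) (dim_row W))) X
   + sandwich (mat_adjoint (embed_lower (dim_col W) (dim_row W))) X"

definition split_channel :: "complex mat \<Rightarrow> complex mat \<Rightarrow> complex mat" where
  "split_channel W X =
     sandwich (embed_upper (dim_col W) (dim_row W) * mat_adjoint W) X
   + sandwich (embed_lower (dim_col W) (dim_row W) * compl_proj W) X"

lemma cptp_merge_channel:
  assumes "isometry n N W"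
  shows "cptp (n + N) N (merge_channel W)"
proof -
  have W: "W \<in> carrier_mat N n"
    using assms by (rule isometry_carrier)
  have U': "mat_adjoint (embed_upper n N) \<in> carrier_mat n (n + N)"
    by simp
  have "mat_adjoint (W * mat_adjoint (embed_upper n N)) * (W * mat_adjoint (embed_upper n N))
      = sandwich (embed_upper n N) (1\<^sub>m n)"
    using adjoint_mult_self[OF W U'] isometry_adjoint_mult[OF assms] by simp
  then have "cptp (n + N) N (\<lambda>X. sandwich (W * mat_adjoint (embed_upper n N)) X
                                 + sandwich (mat_adjoint (embed_lower n N)) X)"
    using W by (intro cptp_kraus2) (auto simp: embed_complete)
  then show ?thesis
    using W unfolding merge_channel_def[abs_def] by simp
qed

lemma merge_channel_four_block_mat:
  assumes W: "W \<in> carrier_mat N n" and A: "A \<in> carrier_mat n n" and B: "B \<in> carrier_mat n N"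
    and C: "C \<in> carrier_mat N n" and D: "D \<in> carrier_mat N N"
  shows "merge_channel W (four_block_mat A B C D) = sandwich W A + D"
  using W A D sandwich_mult[OF W mat_adjoint_carrier[OF embed_carrier(1)], of "four_block_mat A B C D" N]
    compress_upper_four_block_mat[OF A B C D] compress_lower_four_block_mat[OF A B C D]
  unfolding merge_channel_def by simp

lemma cptp_split_channel:
  assumes "isometry n N W"
  shows "cptp N (n + N) (split_channel W)"
proof -
  have W: "W \<in> carrier_mat N n" and R: "compl_proj W \<in> carrier_mat N N"
    using assms by (auto simp: compl_proj_carrier dest: isometry_carrier)
  have "mat_adjoint (embed_upper n N * mat_adjoint W) * (embed_upper n N * mat_adjoint W) = W * mat_adjoint W"
    using adjoint_mult_self[OF embed_carrier(1) mat_adjoint_carrier[OF W]]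
      isometry_adjoint_mult[OF isometry_embed(1)] W
    by simp
  moreover have "mat_adjoint (embed_lower n N * compl_proj W) * (embed_lower n N * compl_proj W) = compl_proj W"
    using adjoint_mult_self[OF embed_carrier(2) R] isometry_adjoint_mult[OF isometry_embed(2)] R W
    by (simp add: mat_adjoint_compl_proj compl_proj_idem[OF assms])
  moreover have "W * mat_adjoint W + compl_proj W = 1\<^sub>m N"
    using W unfolding compl_proj_def by (intro eq_matI) auto
  ultimately have "cptp N (n + N) (\<lambda>X. sandwich (embed_upper n N * mat_adjoint W) X
                                     + sandwich (embed_lower n N * compl_proj W) X)"
    using W R by (intro cptp_kraus2) auto
  then show ?thesis
    using W unfolding split_channel_def[abs_def] by simp
qed

lemma split_channel_eq:
  assumes W: "W \<in> carrier_mat N n" and X: "X \<in> carrier_mat N N"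
  shows "split_channel W X
    = four_block_mat (mat_adjoint W * X * W) (0\<^sub>m n N) (0\<^sub>m N n) (sandwich (compl_proj W) X)"
proof -
  have R: "compl_proj W \<in> carrier_mat N N"
    using W by (rule compl_proj_carrier)
  have "split_channel W X
      = sandwich (embed_upper n N) (sandwich (mat_adjoint W) X)
      + sandwich (embed_lower n N) (sandwich (compl_proj W) X)"
    using W unfolding split_channel_def
    by (simp add: sandwich_mult[OF embed_carrier(1) mat_adjoint_carrier[OF W] X]
        sandwich_mult[OF embed_carrier(2) R X])
  then show ?thesis
    using four_block_diag_sandwich_embed[OF compress_carrier[OF W X] sandwich_carrier[OF R X]] by simp
qed

lemma mtrace_compress_add_compl:
  assumes "isometry n N W" and X: "X \<in> carrier_mat N N"
  shows "mtrace (mat_adjoint W * X * W) + mtrace (sandwich (compl_proj W) X) = mtrace X"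
proof -
  have W: "W \<in> carrier_mat N n" and R: "compl_proj W \<in> carrier_mat N N"
    using assms by (auto simp: compl_proj_carrier dest: isometry_carrier)
  have "mtrace (split_channel W X) = mtrace X"
    using cptp_split_channel[OF assms(1)] X unfolding cptp_def by blast
  then show ?thesis
    using mtrace_four_block_mat[OF compress_carrier[OF W X] sandwich_carrier[OF R X]] W X
    by (simp add: split_channel_eq)
qed

lemma sandwich_compress_add_compl:
  assumes "isometry n N W" and X: "X \<in> carrier_mat N N"
    and commute: "W * mat_adjoint W * X = X * (W * mat_adjoint W)"
  shows "sandwich W (mat_adjoint W * X * W) + sandwich (compl_proj W) X = X"
proof -
  have W: "W \<in> carrier_mat N n" and W': "mat_adjoint W \<in> carrier_mat n N"
    using assms(1) by (auto dest: isometry_carrier)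
  define P where "P = W * mat_adjoint W"
  have P: "P \<in> carrier_mat N N"
    unfolding P_def using W W' by simp
  have PP: "P * P = P"
    unfolding P_def using isometry_range_proj_mult[OF assms(1) W'] .
  have PXP: "P * X * P = P * X"
    using commute assoc_mult_mat[OF X P P] PP unfolding P_def[symmetric] by simp
  have "sandwich W (mat_adjoint W * X * W) = sandwich P X"
    using sandwich_mult[OF W W' X] by (simp add: P_def)
  also have "\<dots> = P * X"
    using PXP mat_adjoint_mult[OF W W'] by (simp add: P_def)
  finally have compress: "sandwich W (mat_adjoint W * X * W) = P * X" .
  have R: "compl_proj W = 1\<^sub>m N - P"
    unfolding P_def compl_proj_def using W by simp
  have RX: "compl_proj W * X = X - P * X"
    unfolding R using minus_mult_distrib_mat[OF one_carrier_mat P X] X by simp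
  have "(X - P * X) * P = 0\<^sub>m N N"
    using minus_mult_distrib_mat[OF X mult_carrier_mat[OF P X] P] PXP commute X P
    unfolding P_def[symmetric] by (simp add: minus_r_inv_mat[of _ N N])
  have XPX: "X - P * X \<in> carrier_mat N N"
    using minus_carrier_mat[OF mult_carrier_mat[OF P X]] .
  have "sandwich (compl_proj W) X = (X - P * X) * (1\<^sub>m N - P)"
    unfolding mat_adjoint_compl_proj[OF W] RX by (simp add: R)
  also have "\<dots> = X - P * X"
    using mult_minus_distrib_mat[OF XPX one_carrier_mat P] \<open>(X - P * X) * P = 0\<^sub>m N N\<close> XPX X P
    by (intro eq_matI) (auto simp: right_mult_one_mat[OF XPX])
  finally show ?thesis
    using compress X P by (intro eq_matI) auto
qed

lemma compress_kron_one:
  assumes "isometry dA dA' VA" and VB: "VB \<in> carrier_mat dB' dB" and S: "S \<in> carrier_mat dB' dB'"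
  shows "mat_adjoint (kron VA VB) * kron (1\<^sub>m dA') S * kron VA VB = kron (1\<^sub>m dA) (mat_adjoint VB * S * VB)"
proof -
  have VA: "VA \<in> carrier_mat dA' dA"
    using assms(1) by (rule isometry_carrier)
  then show ?thesis
    using kron_mult3[OF mat_adjoint_carrier[OF VA] mat_adjoint_carrier[OF VB] one_carrier_mat S VA VB]
      isometry_adjoint_mult[OF assms(1)]
    by (simp add: mat_adjoint_kron)
qed

lemma range_proj_kron_commute:
  assumes VA: "isometry dA dA' VA" and VB: "isometry dB dB' VB" and S: "S \<in> carrier_mat dB dB"
  defines "W \<equiv> kron VA VB"
  shows "W * mat_adjoint W * kron (1\<^sub>m dA') (sandwich VB S)
    = kron (1\<^sub>m dA') (sandwich VB S) * (W * mat_adjoint W)"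
proof -
  have A: "VA \<in> carrier_mat dA' dA" and B: "VB \<in> carrier_mat dB' dB"
    using VA VB by (auto dest: isometry_carrier)
  have A': "mat_adjoint VA \<in> carrier_mat dA dA'" and B': "mat_adjoint VB \<in> carrier_mat dB dB'"
    using A B by auto
  have Y: "sandwich VB S \<in> carrier_mat dB' dB'"
    using sandwich_carrier[OF B S] .
  have WW: "W * mat_adjoint W = kron (VA * mat_adjoint VA) (VB * mat_adjoint VB)"
    unfolding W_def mat_adjoint_kron by (rule kron_mult[OF A B A' B'])
  have "VB * mat_adjoint VB * sandwich VB S = sandwich VB S"
    using isometry_range_proj_mult[OF VB mult_carrier_mat[OF S B']] assoc_mult_mat[OF B S B'] by simp
  moreover have "sandwich VB S * (VB * mat_adjoint VB) = sandwich VB S"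
    using mult_isometry_range_proj[OF VB mult_carrier_mat[OF B S]] .
  ultimately show ?thesis
    unfolding WW using A A'
    by (simp add: kron_mult[OF mult_carrier_mat[OF A A'] mult_carrier_mat[OF B B'] one_carrier_mat Y]
        kron_mult[OF one_carrier_mat Y mult_carrier_mat[OF A A'] mult_carrier_mat[OF B B']])
qed

lemma density_sandwich_isometry:
  assumes "isometry n m V" "density n \<sigma>"
  shows "density m (sandwich V \<sigma>)"
proof -
  have V: "V \<in> carrier_mat m n" and S: "psd n \<sigma>"
    using assms by (auto simp: density_def dest: isometry_carrier)
  then show ?thesis
    using assms mtrace_sandwich[OF V psd_carrier[OF S]] psd_carrier[OF S]
    by (simp add: density_def psd_sandwich isometry_adjoint_mult)
qed

lemma ptrace_A_carrier [simp]: "ptrace_A dA dB \<rho> \<in> carrier_mat dB dB"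
  unfolding ptrace_A_def by simp

lemma ptrace_A_index:
  "j < dB \<Longrightarrow> k < dB \<Longrightarrow> ptrace_A dA dB \<rho> $$ (j, k) = (\<Sum>i<dA. \<rho> $$ (i * dB + j, i * dB + k))"
  unfolding ptrace_A_def by simp

lemma psd_ptrace_A:
  assumes R: "psd (dA * dB) \<rho>"
  shows "psd dB (ptrace_A dA dB \<rho>)"
proof (rule psdI)
  have Rc: "\<rho> \<in> carrier_mat (dA * dB) (dA * dB)"
    using R by (rule psd_carrier)
  fix v :: "complex vec" assume v: "v \<in> carrier_vec dB"
  define w where "w i = vec (dA * dB) (\<lambda>r. if r div dB = i then v $ (r mod dB) else 0)" for i
  have w: "w i \<in> carrier_vec (dA * dB)" for i
    unfolding w_def by simp
  have "conjugate v \<bullet> (ptrace_A dA dB \<rho> *\<^sub>v v)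
      = (\<Sum>j<dB. \<Sum>k<dB. \<Sum>i<dA. cnj (v $ j) * \<rho> $$ (i * dB + j, i * dB + k) * v $ k)"
    unfolding quadratic_form_sum[OF ptrace_A_carrier v]
    by (intro sum.cong refl) (simp add: ptrace_A_index sum_distrib_left sum_distrib_right)
  also have "\<dots> = (\<Sum>i<dA. \<Sum>j<dB. \<Sum>k<dB. cnj (v $ j) * \<rho> $$ (i * dB + j, i * dB + k) * v $ k)"
    by (subst sum.swap) (rule sum.cong[OF refl], rule sum.swap)
  also have "\<dots> = (\<Sum>i<dA. conjugate (w i) \<bullet> (\<rho> *\<^sub>v w i))"
  proof (rule sum.cong[OF refl])
    fix i assume i: "i \<in> {..<dA}"
    have "conjugate (w i) \<bullet> (\<rho> *\<^sub>v w i)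
        = (\<Sum>r<dA * dB. if r div dB = i then (\<Sum>s<dA * dB. if s div dB = i
             then cnj (v $ (r mod dB)) * \<rho> $$ (r, s) * v $ (s mod dB) else 0) else 0)"
      unfolding quadratic_form_sum[OF Rc w] by (intro sum.cong refl) (auto simp: w_def intro!: sum.cong)
    also have "\<dots> = (\<Sum>j<dB. \<Sum>k<dB. cnj (v $ j) * \<rho> $$ (i * dB + j, i * dB + k) * v $ k)"
      using i by (subst sum_lessThan_mult_div_eq) (auto intro!: sum.cong simp: sum_lessThan_mult_div_eq)
    finally show "(\<Sum>j<dB. \<Sum>k<dB. cnj (v $ j) * \<rho> $$ (i * dB + j, i * dB + k) * v $ k)
        = conjugate (w i) \<bullet> (\<rho> *\<^sub>v w i)" by simp
  qed
  finally show "0 \<le> conjugate v \<bullet> (ptrace_A dA dB \<rho> *\<^sub>v v)"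
    using R w by (simp add: sum_nonneg psd_quadratic_form_nonneg)
qed simp

lemma sandwich_kron_index:
  assumes VA: "VA \<in> carrier_mat dA' dA" and VB: "VB \<in> carrier_mat dB' dB"
    and R: "\<rho> \<in> carrier_mat (dA * dB) (dA * dB)" and x: "x < dA' * dB'" and y: "y < dA' * dB'"
  shows "sandwich (kron VA VB) \<rho> $$ (x, y)
    = (\<Sum>a2<dA. \<Sum>b2<dB. \<Sum>a<dA. \<Sum>b<dB. VA $$ (x div dB', a) * VB $$ (x mod dB', b)
         * \<rho> $$ (a * dB + b, a2 * dB + b2) * (cnj (VA $$ (y div dB', a2)) * cnj (VB $$ (y mod dB', b2))))"
proof -
  have W: "kron VA VB \<in> carrier_mat (dA' * dB') (dA * dB)"
    using VA VB by simp
  have "dB' > 0"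
    using x by (cases dB') auto
  then have xy: "x div dB' < dA'" "y div dB' < dA'" "x mod dB' < dB'" "y mod dB' < dB'"
    using x y by (auto simp: less_mult_imp_div_less)
  have "sandwich (kron VA VB) \<rho> $$ (x, y)
      = (\<Sum>a2<dA. \<Sum>b2<dB. (\<Sum>a<dA. \<Sum>b<dB. kron VA VB $$ (x, a * dB + b) * \<rho> $$ (a * dB + b, a2 * dB + b2))
           * mat_adjoint (kron VA VB) $$ (a2 * dB + b2, y))"
    by (simp only: mult3_index[OF W R mat_adjoint_carrier[OF W] x y] sum_lessThan_mult)
  also have "\<dots> = (\<Sum>a2<dA. \<Sum>b2<dB. \<Sum>a<dA. \<Sum>b<dB. VA $$ (x div dB', a) * VB $$ (x mod dB', b)
         * \<rho> $$ (a * dB + b, a2 * dB + b2) * (cnj (VA $$ (y div dB', a2)) * cnj (VB $$ (y mod dB', b2))))"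
    using VA VB x y xy
    by (auto simp: sum_distrib_right mult_add_less_mult intro!: sum.cong)
  finally show ?thesis .
qed

lemma isometry_columns_orthonormal:
  assumes "isometry n m V" "a < n" "b < n"
  shows "(\<Sum>i<m. V $$ (i, a) * cnj (V $$ (i, b))) = (if a = b then 1 else 0)"
proof -
  have "(mat_adjoint V * V) $$ (b, a) = (\<Sum>i<m. cnj (V $$ (i, b)) * V $$ (i, a))"
    using isometry_carrier[OF assms(1)] assms by (simp add: scalar_prod_def atLeast0LessThan)
  then show ?thesis
    using isometry_adjoint_mult[OF assms(1)] assms by (auto simp: mult.commute)
qed

lemma ptrace_A_sandwich_kron:
  assumes "isometry dA dA' VA" and VB: "VB \<in> carrier_mat dB' dB" and R: "\<rho> \<in> carrier_mat (dA * dB) (dA * dB)"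
  shows "ptrace_A dA' dB' (sandwich (kron VA VB) \<rho>) = sandwich VB (ptrace_A dA dB \<rho>)"
proof (rule eq_matI)
  have VA: "VA \<in> carrier_mat dA' dA"
    using assms(1) by (rule isometry_carrier)
  fix j k assume "j < dim_row (sandwich VB (ptrace_A dA dB \<rho>))" "k < dim_col (sandwich VB (ptrace_A dA dB \<rho>))"
  then have j: "j < dB'" and k: "k < dB'"
    using VB by auto
  define f where "f a b a2 b2 = VB $$ (j, b) * \<rho> $$ (a * dB + b, a2 * dB + b2) * cnj (VB $$ (k, b2))"
    for a b a2 b2
  have "ptrace_A dA' dB' (sandwich (kron VA VB) \<rho>) $$ (j, k)
      = (\<Sum>i<dA'. sandwich (kron VA VB) \<rho> $$ (i * dB' + j, i * dB' + k))"
    by (rule ptrace_A_index[OF j k])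
  also have "\<dots> = (\<Sum>i<dA'. \<Sum>a2<dA. \<Sum>b2<dB. \<Sum>a<dA. \<Sum>b<dB. VA $$ (i, a) * cnj (VA $$ (i, a2)) * f a b a2 b2)"
  proof (rule sum.cong[OF refl])
    fix i assume "i \<in> {..<dA'}"
    then have xy: "i * dB' + j < dA' * dB'" "i * dB' + k < dA' * dB'"
      using j k by (simp_all add: mult_add_less_mult)
    show "sandwich (kron VA VB) \<rho> $$ (i * dB' + j, i * dB' + k)
        = (\<Sum>a2<dA. \<Sum>b2<dB. \<Sum>a<dA. \<Sum>b<dB. VA $$ (i, a) * cnj (VA $$ (i, a2)) * f a b a2 b2)"
      unfolding sandwich_kron_index[OF VA VB R xy] using j k by (simp add: f_def mult_ac)
  qed
  also have "\<dots> = (\<Sum>a2<dA. \<Sum>b2<dB. \<Sum>a<dA. \<Sum>b<dB. \<Sum>i<dA'. VA $$ (i, a) * cnj (VA $$ (i, a2)) * f a b a2 b2)"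
    by (simp only: sum.swap[of _ "{..<dA'}"])
  also have "\<dots> = (\<Sum>a2<dA. \<Sum>b2<dB. \<Sum>a<dA. if a = a2 then (\<Sum>b<dB. f a b a2 b2) else 0)"
    by (intro sum.cong refl)
      (auto simp: sum_distrib_right[symmetric] isometry_columns_orthonormal[OF assms(1)] sum_distrib_left)
  also have "\<dots> = (\<Sum>a2<dA. \<Sum>b2<dB. \<Sum>b<dB. f a2 b a2 b2)"
    by (simp add: sum.delta)
  also have "\<dots> = (\<Sum>b2<dB. \<Sum>b<dB. \<Sum>a<dA. f a b a b2)"
    by (simp only: sum.swap[of _ "{..<dA}"])
  also have "\<dots> = sandwich VB (ptrace_A dA dB \<rho>) $$ (j, k)"
    by (subst mult3_index[OF VB ptrace_A_carrier mat_adjoint_carrier[OF VB] j k])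
      (use VB j k in \<open>auto simp: f_def ptrace_A_index sum_distrib_left sum_distrib_right mult_ac
        intro!: sum.cong\<close>)
  finally show "ptrace_A dA' dB' (sandwich (kron VA VB) \<rho>) $$ (j, k)
      = sandwich VB (ptrace_A dA dB \<rho>) $$ (j, k)" .
qed (use VB in \<open>auto simp: ptrace_A_def\<close>)

section \<open>Invariance of the conditional K-entropies\<close>

locale relative_K_entropy =
  fixes D :: "complex mat \<Rightarrow> complex mat \<Rightarrow> ereal"
  assumes data_processing: "prop_a D" and direct_sum_zero: "prop_b D"
begin

lemma D_merge_le:
  assumes W: "isometry n N W" and \<rho>: "psd n \<rho>" and T: "psd n T" and T': "psd N T'"
  shows "D (sandwich W \<rho>) (sandwich W T + T') \<le> D \<rho> T"
proof -
  have Wc: "W \<in> carrier_mat N n"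
    using W by (rule isometry_carrier)
  let ?\<rho> = "four_block_mat \<rho> (0\<^sub>m n N) (0\<^sub>m N n) (0\<^sub>m N N)"
  let ?T = "four_block_mat T (0\<^sub>m n N) (0\<^sub>m N n) T'"
  have "merge_channel W ?\<rho> = sandwich W \<rho>"
    using merge_channel_four_block_mat[OF Wc psd_carrier[OF \<rho>]] sandwich_carrier[OF Wc psd_carrier[OF \<rho>]]
    by simp
  moreover have "merge_channel W ?T = sandwich W T + T'"
    using merge_channel_four_block_mat[OF Wc psd_carrier[OF T] _ _ psd_carrier[OF T']] by simp
  moreover have "D (merge_channel W ?\<rho>) (merge_channel W ?T) \<le> D ?\<rho> ?T"
    using data_processing cptp_merge_channel[OF W] psd_four_block_diag[OF \<rho> psd_zero]
      psd_four_block_diag[OF T T']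
    unfolding prop_a_def by blast
  moreover have "D ?\<rho> ?T = D \<rho> T"
    using direct_sum_zero \<rho> T T' unfolding prop_b_def by blast
  ultimately show ?thesis
    by simp
qed

lemma D_add_right_le:
  assumes S: "psd n S" and T: "psd n T" and Z: "psd n Z"
  shows "D S (T + Z) \<le> D S T"
  using D_merge_le[of n n "1\<^sub>m n" S T Z] assms psd_carrier[OF S] psd_carrier[OF T] by (simp add: isometry_def)

lemma D_compress_le:
  assumes W: "isometry n N W" and \<rho>: "psd n \<rho>" and X: "psd N X"
  shows "D \<rho> (mat_adjoint W * X * W) \<le> D (sandwich W \<rho>) X"
proof -
  have Wc: "W \<in> carrier_mat N n" and \<rho>c: "\<rho> \<in> carrier_mat n n" and Xc: "X \<in> carrier_mat N N"
    and R: "compl_proj W \<in> carrier_mat N N"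
    using assms by (auto simp: compl_proj_carrier dest: isometry_carrier psd_carrier)
  have "sandwich (compl_proj W) (sandwich W \<rho>) = 0\<^sub>m N N"
    using sandwich_mult[OF R Wc \<rho>c] compl_proj_mult_isometry[OF W] \<rho>c by simp
  then have "split_channel W (sandwich W \<rho>) = four_block_mat \<rho> (0\<^sub>m n N) (0\<^sub>m N n) (0\<^sub>m N N)"
    using split_channel_eq[OF Wc sandwich_carrier[OF Wc \<rho>c]] adjoint_sandwich_isometry[OF W \<rho>c] by simp
  moreover have "split_channel W X
      = four_block_mat (mat_adjoint W * X * W) (0\<^sub>m n N) (0\<^sub>m N n) (sandwich (compl_proj W) X)"
    by (rule split_channel_eq[OF Wc Xc])
  moreover have "psd n (mat_adjoint W * X * W)"
    using psd_sandwich[OF X mat_adjoint_carrier[OF Wc]] by simp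
  moreover have "D (split_channel W (sandwich W \<rho>)) (split_channel W X) \<le> D (sandwich W \<rho>) X"
    using data_processing cptp_split_channel[OF W] psd_sandwich[OF \<rho> Wc] X unfolding prop_a_def by blast
  ultimately show ?thesis
    using direct_sum_zero \<rho> psd_sandwich[OF X R] unfolding prop_b_def by metis
qed

lemma D_sandwich_isometry_eq:
  assumes W: "isometry n N W" and \<rho>: "psd n \<rho>" and X: "psd N X"
    and commute: "W * mat_adjoint W * X = X * (W * mat_adjoint W)"
  shows "D (sandwich W \<rho>) X = D \<rho> (mat_adjoint W * X * W)"
proof (rule antisym)
  have Wc: "W \<in> carrier_mat N n" and R: "compl_proj W \<in> carrier_mat N N"
    using W by (auto simp: compl_proj_carrier dest: isometry_carrier)
  have "D (sandwich W \<rho>) (sandwich W (mat_adjoint W * X * W) + sandwich (compl_proj W) X)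
      \<le> D \<rho> (mat_adjoint W * X * W)"
    using D_merge_le[OF W \<rho> _ psd_sandwich[OF X R]] psd_sandwich[OF X mat_adjoint_carrier[OF Wc]] by simp
  then show "D (sandwich W \<rho>) X \<le> D \<rho> (mat_adjoint W * X * W)"
    using sandwich_compress_add_compl[OF W psd_carrier[OF X] commute] by simp
  show "D \<rho> (mat_adjoint W * X * W) \<le> D (sandwich W \<rho>) X"
    by (rule D_compress_le[OF W \<rho> X])
qed

lemma D_sandwich_kron_eq:
  assumes VA: "isometry dA dA' VA" and VB: "isometry dB dB' VB"
    and \<rho>: "psd (dA * dB) \<rho>" and \<sigma>: "psd dB \<sigma>"
  shows "D (sandwich (kron VA VB) \<rho>) (kron (1\<^sub>m dA') (sandwich VB \<sigma>)) = D \<rho> (kron (1\<^sub>m dA) \<sigma>)"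
proof -
  have VBc: "VB \<in> carrier_mat dB' dB" and \<sigma>c: "\<sigma> \<in> carrier_mat dB dB"
    using VB \<sigma> by (auto dest: isometry_carrier psd_carrier)
  show ?thesis
    using D_sandwich_isometry_eq[OF isometry_kron[OF VA VB] \<rho> psd_kron_one[OF psd_sandwich[OF \<sigma> VBc]]
        range_proj_kron_commute[OF VA VB \<sigma>c]]
      compress_kron_one[OF VA VBc sandwich_carrier[OF VBc \<sigma>c]] adjoint_sandwich_isometry[OF VB \<sigma>c]
    by simp
qed

lemma H_K1_sandwich_kron:
  assumes VA: "isometry dA dA' VA" and VB: "isometry dB dB' VB" and \<rho>: "psd (dA * dB) \<rho>"
  shows "H_K1 D dA' dB' (sandwich (kron VA VB) \<rho>) = H_K1 D dA dB \<rho>"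
  unfolding H_K1_def
  using ptrace_A_sandwich_kron[OF VA isometry_carrier[OF VB] psd_carrier[OF \<rho>]]
    D_sandwich_kron_eq[OF VA VB \<rho> psd_ptrace_A[OF \<rho>]]
  by simp

lemma exists_density_D_le:
  assumes VA: "isometry dA dA' VA" and VB: "isometry dB dB' VB"
    and \<rho>: "density (dA * dB) \<rho>" and \<sigma>': "density dB' \<sigma>'"
  shows "\<exists>\<sigma>. density dB \<sigma> \<and> D \<rho> (kron (1\<^sub>m dA) \<sigma>) \<le> D (sandwich (kron VA VB) \<rho>) (kron (1\<^sub>m dA') \<sigma>')"
proof -
  have \<rho>p: "psd (dA * dB) \<rho>" and S': "psd dB' \<sigma>'" and tr: "mtrace \<sigma>' = 1"
    using \<rho> \<sigma>' by (auto simp: density_def)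
  have VBc: "VB \<in> carrier_mat dB' dB" and R: "compl_proj VB \<in> carrier_mat dB' dB'"
    using VB by (auto simp: compl_proj_carrier dest: isometry_carrier)
  have "0 < dB"
    using density_dim_pos[OF \<rho>] by simp
  define \<sigma>0 where "\<sigma>0 = mat_adjoint VB * \<sigma>' * VB"
  define t where "t = mtrace (sandwich (compl_proj VB) \<sigma>')"
  define Z :: "complex mat" where "Z = (t / of_nat dB) \<cdot>\<^sub>m 1\<^sub>m dB"
  have S0: "psd dB \<sigma>0"
    unfolding \<sigma>0_def using psd_sandwich[OF S' mat_adjoint_carrier[OF VBc]] by simp
  have "0 \<le> t"
    unfolding t_def by (rule mtrace_psd_nonneg[OF psd_sandwich[OF S' R]])
  then have Z: "psd dB Z"
    unfolding Z_def by (intro psd_smult_one) (auto simp: complex_nonneg_iff)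
  have "density dB (\<sigma>0 + Z)"
    unfolding Z_def using mtrace_compress_add_compl[OF VB psd_carrier[OF S']] tr S0 \<open>0 < dB\<close> \<open>0 \<le> t\<close>
    by (intro density_pad) (simp_all add: \<sigma>0_def t_def)
  moreover have "D \<rho> (kron (1\<^sub>m dA) (\<sigma>0 + Z)) \<le> D \<rho> (kron (1\<^sub>m dA) \<sigma>0)"
    using D_add_right_le[OF \<rho>p psd_kron_one[OF S0] psd_kron_one[OF Z]]
    by (simp add: kron_add_right[OF psd_carrier[OF S0] psd_carrier[OF Z]])
  moreover have "D \<rho> (kron (1\<^sub>m dA) \<sigma>0) \<le> D (sandwich (kron VA VB) \<rho>) (kron (1\<^sub>m dA') \<sigma>')"
    using D_compress_le[OF isometry_kron[OF VA VB] \<rho>p psd_kron_one[OF S']]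
      compress_kron_one[OF VA VBc psd_carrier[OF S']]
    by (simp add: \<sigma>0_def)
  ultimately show ?thesis
    by (meson order_trans)
qed

lemma H_K2_sandwich_kron:
  assumes VA: "isometry dA dA' VA" and VB: "isometry dB dB' VB" and \<rho>: "density (dA * dB) \<rho>"
  shows "H_K2 D dA' dB' (sandwich (kron VA VB) \<rho>) = H_K2 D dA dB \<rho>"
  unfolding H_K2_def
proof (rule antisym; rule SUP_mono)
  fix \<sigma>' assume "\<sigma>' \<in> {\<sigma>. density dB' \<sigma>}"
  then obtain \<sigma> where "density dB \<sigma>"
    and "D \<rho> (kron (1\<^sub>m dA) \<sigma>) \<le> D (sandwich (kron VA VB) \<rho>) (kron (1\<^sub>m dA') \<sigma>')"
    using exists_density_D_le[OF VA VB \<rho>] by blast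
  then show "\<exists>\<sigma>\<in>{\<sigma>. density dB \<sigma>}.
      - D (sandwich (kron VA VB) \<rho>) (kron (1\<^sub>m dA') \<sigma>') \<le> - D \<rho> (kron (1\<^sub>m dA) \<sigma>)"
    by auto
next
  fix \<sigma> assume "\<sigma> \<in> {\<sigma>. density dB \<sigma>}"
  then have \<sigma>: "density dB \<sigma>"
    by simp
  have "density dB' (sandwich VB \<sigma>)"
    by (rule density_sandwich_isometry[OF VB \<sigma>])
  moreover have "D (sandwich (kron VA VB) \<rho>) (kron (1\<^sub>m dA') (sandwich VB \<sigma>)) = D \<rho> (kron (1\<^sub>m dA) \<sigma>)"
    using D_sandwich_kron_eq[OF VA VB] \<rho> \<sigma> by (simp add: density_def)
  ultimately show "\<exists>\<sigma>'\<in>{\<sigma>. density dB' \<sigma>}.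
      - D \<rho> (kron (1\<^sub>m dA) \<sigma>) \<le> - D (sandwich (kron VA VB) \<rho>) (kron (1\<^sub>m dA') \<sigma>')"
    by (metis mem_Collect_eq order_refl)
qed

end

theorem lemma8:
  fixes D :: "complex mat \<Rightarrow> complex mat \<Rightarrow> ereal"
    and dA dB dA' dB' :: nat and VA VB \<rho> :: "complex mat"
  assumes "prop_a D" and "prop_b D"
    and "isometry dA dA' VA" and "isometry dB dB' VB"
    and "density (dA * dB) \<rho>"
  shows "H_K1 D dA dB \<rho> =
           H_K1 D dA' dB' (kron VA VB * \<rho> * kron (mat_adjoint VA) (mat_adjoint VB)) \<and>
         H_K2 D dA dB \<rho> =
           H_K2 D dA' dB' (kron VA VB * \<rho> * kron (mat_adjoint VA) (mat_adjoint VB))"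
proof -
  interpret relative_K_entropy D
    using assms(1,2) by unfold_locales
  show ?thesis
    using H_K1_sandwich_kron[OF assms(3,4)] H_K2_sandwich_kron[OF assms(3-5)] assms(5)
    by (simp add: density_def mat_adjoint_kron)
qed

end
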